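(* For integers $N\ge 2$ and $n\ge 1$, $$B_{N,n}=\frac{N}{N+n}\left\{B_{N-1,n}+\sum_{m=1}^{n-1}\binom{n}{n-m+1}B_{N,m}B_{N-1,n-m+1}\right\}.$$
   Context: For a positive integer $N$, the hypergeometric Bernoulli numbers $B_{N,n}$ ($n\ge 0$) are defined by $$\frac{x^N/N!}{e^x-\sum_{n=0}^{N-1}x^n/n!}=\sum_{n=0}^\infty B_{N,n}\frac{x^n}{n!}.$$ *)

theory Defs
  imports Complex_Main "HOL-Computational_Algebra.Formal_Power_Series"
begin

text \<open>The FPS division shifts by the subdegree (= N) of the denominator, as in the paper.\<close>

definition hyp_bernoulli_fps :: "nat \<Rightarrow> real fps" where
  "hyp_bernoulli_fps N =
     (fps_const (1 / fact N) * fps_X ^ N) /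
     (fps_exp 1 - Abs_fps (\<lambda>k. if k < N then 1 / fact k else 0))"

definition hyp_bernoulli :: "nat \<Rightarrow> nat \<Rightarrow> real" where
  "hyp_bernoulli N n = fact n * fps_nth (hyp_bernoulli_fps N) n"

end

(* Write G_N = sum_k x^k / (k + N)!, so that e^x - sum_{k<N} x^k/k! = x^N G_N and the
   generating function F_N of the B_{N,n} satisfies F_N G_N = 1/N!.  The identities
   x G_N' + N G_N = G_{N-1} and G_{N-1} = 1/(N-1)! + x G_N turn this into the differential
   relation F_N - F_{N-1} = F_N' (F_{N-1} - 1).  Comparing coefficients of x^n gives a
   convolution whose last term, involving B_{N-1,1} = -1/N, is a multiple of B_{N,n};
   moving it to the left-hand side yields the factor N/(N+n). *)

theory Submission
  imports Defs
begin

unbundle fps_syntax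

definition exp_tail :: "nat \<Rightarrow> 'a::field_char_0 fps" where
  "exp_tail N = Abs_fps (\<lambda>k. 1 / fact (k + N))"

lemma exp_tail_nth_0 [simp]: "exp_tail N $ 0 = 1 / fact N"
  by (simp add: exp_tail_def)

lemma exp_tail_nonzero [simp]: "exp_tail N \<noteq> 0"
  by (metis exp_tail_nth_0 divide_eq_0_iff fact_nonzero fps_zero_nth one_neq_zero)

lemma exp_minus_taylor_eq_exp_tail:
  "fps_exp 1 - Abs_fps (\<lambda>k. if k < N then 1 / fact k else 0) = fps_X ^ N * exp_tail N"
  by (rule fps_ext) (auto simp: exp_tail_def fps_X_power_mult_nth)

lemma exp_tail_Suc: "exp_tail M = fps_const (1 / fact M) + fps_X * exp_tail (Suc M)"
proof (rule fps_ext)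
  fix k
  show "exp_tail M $ k = (fps_const (1 / fact M) + fps_X * exp_tail (Suc M)) $ k"
    by (cases k) (simp_all add: exp_tail_def fps_X_mult_nth del: fact_Suc)
qed

lemma exp_tail_deriv:
  "fps_X * fps_deriv (exp_tail (Suc M)) + of_nat (Suc M) * exp_tail (Suc M) = exp_tail M"
proof (rule fps_ext)
  fix k
  have "(fps_X * fps_deriv (exp_tail (Suc M)) :: 'a fps) $ k = of_nat k / fact (k + Suc M)"
    by (cases k) (simp_all add: exp_tail_def fps_X_mult_nth)
  moreover have "(of_nat (Suc M) * exp_tail (Suc M) :: 'a fps) $ k = of_nat (Suc M) / fact (k + Suc M)"
    by (simp add: exp_tail_def fps_of_nat[symmetric] del: of_nat_Suc)
  moreover have "of_nat k / fact (k + Suc M) + of_nat (Suc M) / fact (k + Suc M) = (1 / fact (k + M) :: 'a)"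
  proof -
    have "of_nat k + of_nat (Suc M) = (of_nat (Suc (k + M)) :: 'a)"
      by simp
    then show ?thesis
      by (simp add: add_divide_distrib[symmetric] del: of_nat_Suc)
  qed
  moreover have "(exp_tail M :: 'a fps) $ k = 1 / fact (k + M)"
    by (simp add: exp_tail_def)
  ultimately show "(fps_X * fps_deriv (exp_tail (Suc M)) + of_nat (Suc M) * exp_tail (Suc M)) $ k = (exp_tail M :: 'a fps) $ k"
    by (simp only: fps_add_nth)
qed

lemma hyp_bernoulli_fps_mult_exp_tail:
  "hyp_bernoulli_fps N * exp_tail N = fps_const (1 / fact N)"
proof -
  have "hyp_bernoulli_fps N = (fps_const (1 / fact N) * fps_X ^ N) / (exp_tail N * fps_X ^ N)"
    unfolding hyp_bernoulli_fps_def exp_minus_taylor_eq_exp_tail by (simp add: mult.commute)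
  also have "\<dots> = fps_const (1 / fact N) / exp_tail N"
    by (rule fps_divide_cancel) simp
  finally show ?thesis
    by (simp add: fps_divide_unit inverse_mult_eq_1)
qed

lemma hyp_bernoulli_fps_Suc_diff:
  "hyp_bernoulli_fps (Suc M) - hyp_bernoulli_fps M
     = fps_deriv (hyp_bernoulli_fps (Suc M)) * (hyp_bernoulli_fps M - 1)"
proof -
  let ?F = "hyp_bernoulli_fps (Suc M)" and ?H = "hyp_bernoulli_fps M"
  let ?a = "exp_tail (Suc M) :: real fps" and ?b = "exp_tail M :: real fps"
  let ?p = "fps_const (1 / fact (Suc M)) :: real fps" and ?q = "fps_const (1 / fact M) :: real fps"
  have Fa: "?F * ?a = ?p" and Hb: "?H * ?b = ?q"
    by (rule hyp_bernoulli_fps_mult_exp_tail)+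
  have "1 / fact M = real (Suc M) / fact (Suc M)"
    by (simp del: of_nat_Suc)
  then have q: "?q = of_nat (Suc M) * ?p"
    by (simp add: fps_of_nat[symmetric] fps_const_mult[symmetric] del: of_nat_Suc fact_Suc)
  have deriv_Fa: "fps_deriv ?F * ?a = - (?F * fps_deriv ?a)"
  proof -
    have "fps_deriv (?F * ?a) = 0"
      by (simp only: Fa fps_deriv_const)
    then show ?thesis
      by (simp add: fps_deriv_mult eq_neg_iff_add_eq_0 algebra_simps)
  qed
  have tail: "?H * ?b - ?b = - (fps_X * ?a)"
    unfolding Hb by (subst exp_tail_Suc[of M]) simp
  have "(?F - ?H) * (?a * ?b) = (?F * ?a) * ?b - (?H * ?b) * ?a"
    by (simp add: algebra_simps)
  also have "\<dots> = ?p * (?b - of_nat (Suc M) * ?a)"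
    by (simp only: Fa Hb q algebra_simps)
  also have "\<dots> = ?p * (fps_X * fps_deriv ?a)"
    by (simp only: exp_tail_deriv[of M, symmetric] add_diff_cancel_right')
  also have "\<dots> = (fps_deriv ?F * ?a) * (?H * ?b - ?b)"
    unfolding tail deriv_Fa Fa[symmetric] by (simp add: algebra_simps)
  also have "\<dots> = (fps_deriv ?F * (?H - 1)) * (?a * ?b)"
    by (simp add: algebra_simps)
  finally show ?thesis
    by (simp add: mult_right_cancel)
qed

lemma hyp_bernoulli_fps_nth_0 [simp]: "hyp_bernoulli_fps N $ 0 = 1"
proof -
  have "(hyp_bernoulli_fps N * exp_tail N) $ 0 = 1 / fact N"
    by (simp add: hyp_bernoulli_fps_mult_exp_tail)
  then show ?thesis
    by simp
qed

lemma hyp_bernoulli_1: "hyp_bernoulli N 1 = - 1 / real (Suc N)"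
proof -
  have "(hyp_bernoulli_fps N * exp_tail N) $ 1 = 0"
    by (simp add: hyp_bernoulli_fps_mult_exp_tail)
  then have "1 / fact (Suc N) + hyp_bernoulli_fps N $ 1 / fact N = 0"
    by (simp add: fps_mult_nth_1 exp_tail_def del: fact_Suc)
  then have "hyp_bernoulli_fps N $ 1 = - (fact N / fact (Suc N))"
    by (simp add: field_simps del: fact_Suc)
  then show ?thesis
    by (simp add: hyp_bernoulli_def)
qed

lemma hyp_bernoulli_Suc_diff:
  "hyp_bernoulli (Suc M) n - hyp_bernoulli M n =
     (\<Sum>i<n. real (n choose i) * hyp_bernoulli (Suc M) (Suc i) * hyp_bernoulli M (n - i))"
proof -
  let ?F = "hyp_bernoulli_fps (Suc M)" and ?H = "hyp_bernoulli_fps M"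
  have "?F $ n - ?H $ n = (\<Sum>i\<le>n. fps_deriv ?F $ i * (?H - 1) $ (n - i))"
    by (simp only: hyp_bernoulli_fps_Suc_diff fps_mult_nth atLeast0AtMost flip: fps_sub_nth)
  also have "\<dots> = (\<Sum>i<n. real (Suc i) * ?F $ Suc i * ?H $ (n - i))"
    by (simp add: lessThan_Suc_atMost[symmetric] algebra_simps)
  finally have "fact n * (?F $ n - ?H $ n) = (\<Sum>i<n. fact n * real (Suc i) * ?F $ Suc i * ?H $ (n - i))"
    by (simp add: sum_distrib_left mult.assoc)
  also have "\<dots> = (\<Sum>i<n. real (n choose i) * hyp_bernoulli (Suc M) (Suc i) * hyp_bernoulli M (n - i))"
  proof (rule sum.cong)
    fix i
    assume "i \<in> {..<n}"
    then have "fact n = real (n choose i) * fact i * fact (n - i)"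
      by (simp add: binomial_fact)
    then show "fact n * real (Suc i) * ?F $ Suc i * ?H $ (n - i)
        = real (n choose i) * hyp_bernoulli (Suc M) (Suc i) * hyp_bernoulli M (n - i)"
      by (simp add: hyp_bernoulli_def del: of_nat_Suc)
  qed simp
  finally show ?thesis
    by (simp add: hyp_bernoulli_def algebra_simps)
qed

lemma hyp_bernoulli_Suc_Suc:
  "hyp_bernoulli (Suc M) (Suc k) = real (Suc M) / real (Suc M + Suc k) *
     (hyp_bernoulli M (Suc k) +
      (\<Sum>i<k. real (Suc k choose i) * hyp_bernoulli (Suc M) (Suc i) * hyp_bernoulli M (Suc k - i)))"
  (is "?B = _ * (?B' + ?S)")
proof -
  have "?B - ?B' = ?S + real (Suc k) * ?B * hyp_bernoulli M 1"
    using hyp_bernoulli_Suc_diff[of M "Suc k"] by simp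
  also have "\<dots> = ?S + - (real (Suc k) / real (Suc M)) * ?B"
    by (simp add: hyp_bernoulli_1[unfolded One_nat_def])
  finally have recurrence: "?B - ?B' = ?S + - (real (Suc k) / real (Suc M)) * ?B" .
  have solve: "x = b / (b + a) * (y + s)"
    if "x - y = s + - (a / b) * x" and "b > 0" and "a \<ge> 0" for x y s a b :: real
    using that by (simp add: field_simps)
  show ?thesis
    unfolding of_nat_add by (rule solve[OF recurrence]) simp_all
qed

theorem lemma2:
  fixes N n :: nat
  assumes "N \<ge> 2" and "n \<ge> 1"
  shows "hyp_bernoulli N n =
           real N / real (N + n) *
           (hyp_bernoulli (N - 1) n +
            (\<Sum>m = 1..n - 1. real (n choose (n - m + 1)) * hyp_bernoulli N m
                                * hyp_bernoulli (N - 1) (n - m + 1)))"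
proof -
  obtain M where N: "N = Suc M" using assms(1) by (cases N) auto
  obtain k where n: "n = Suc k" using assms(2) by (cases n) auto
  have "(\<Sum>m = 1..k. real (n choose (n - m + 1)) * hyp_bernoulli N m * hyp_bernoulli M (n - m + 1))
      = (\<Sum>i<k. real (n choose i) * hyp_bernoulli N (Suc i) * hyp_bernoulli M (n - i))"
    unfolding sum.atLeast1_atMost_eq[folded One_nat_def]
  proof (rule sum.cong)
    fix i
    assume "i \<in> {..<k}"
    then have "n - Suc i + 1 = n - i" and "n choose (n - i) = n choose i"
      using binomial_symmetric[of i n] by (simp_all add: n)
    then show "real (n choose (n - Suc i + 1)) * hyp_bernoulli N (Suc i) * hyp_bernoulli M (n - Suc i + 1)
        = real (n choose i) * hyp_bernoulli N (Suc i) * hyp_bernoulli M (n - i)"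
      by simp
  qed simp
  then show ?thesis
    using hyp_bernoulli_Suc_Suc[of M k] by (simp add: N n)
qed

end
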